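(* Let $A$ be a first countable locally convex topological vector space over $\mathbb C$ and give $A^\vee$ the topology of uniform convergence on compact sets. Then on $\mathrm{Max}\,A$ the lower Vietoris topology is finer than the topology generated by the sets $\{V\in\mathrm{Max}\,A: F(V)\cap K'=\emptyset\}$ with $K'\subset A^\vee$ compact.
   Context: $\mathrm{Max}\,A$ is the set of closed subspaces of $A$; its lower Vietoris topology is generated by $\{V:V\cap U\ne\emptyset\}$, $U\subset A$ open. $A^\vee$ is the continuous dual with subbasis $\{\phi:\phi(K)\subset U\}$, $K\subset A$ compact, $U\subset\mathbb C$ open; $F(V)=\{\phi\in A^\vee:\phi|_V=0\}$. *)

theory Defs
  imports "HOL-Analysis.Analysis"
begin

definition gen_top_on :: "'b set \<Rightarrow> 'b set set \<Rightarrow> 'b topology" where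
  "gen_top_on X S = topology_generated_by (insert X ((\<lambda>s. X \<inter> s) ` S))"

definition complex_tvs :: "(complex \<Rightarrow> 'a::{ab_group_add,topological_space} \<Rightarrow> 'a) \<Rightarrow> bool" where
  "complex_tvs sc \<longleftrightarrow> vector_space sc
     \<and> continuous_on UNIV (\<lambda>p::'a \<times> 'a. fst p + snd p)
     \<and> continuous_on UNIV (\<lambda>p::complex \<times> 'a. sc (fst p) (snd p))"

definition convex_sc :: "(complex \<Rightarrow> 'a::ab_group_add \<Rightarrow> 'a) \<Rightarrow> 'a set \<Rightarrow> bool" where
  "convex_sc sc C \<longleftrightarrow> (\<forall>x\<in>C. \<forall>y\<in>C. \<forall>t::real. 0 \<le> t \<and> t \<le> 1 \<longrightarrow>
      sc (complex_of_real t) x + sc (complex_of_real (1 - t)) y \<in> C)"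

definition locally_convex :: "(complex \<Rightarrow> 'a::{ab_group_add,topological_space} \<Rightarrow> 'a) \<Rightarrow> bool" where
  "locally_convex sc \<longleftrightarrow> complex_tvs sc \<and>
     (\<forall>W. open W \<and> 0 \<in> W \<longrightarrow> (\<exists>C. open C \<and> 0 \<in> C \<and> C \<subseteq> W \<and> convex_sc sc C))"

definition cdual :: "(complex \<Rightarrow> 'a::{ab_group_add,topological_space} \<Rightarrow> 'a) \<Rightarrow> ('a \<Rightarrow> complex) set" where
  "cdual sc = {\<phi>. Vector_Spaces.linear sc (*) \<phi> \<and> continuous_on UNIV \<phi>}"

text \<open>Compact-open topology (uniform convergence on compacta) on the dual.\<close>
definition dual_top :: "(complex \<Rightarrow> 'a::{ab_group_add,topological_space} \<Rightarrow> 'a) \<Rightarrow> ('a \<Rightarrow> complex) topology" where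
  "dual_top sc = gen_top_on (cdual sc)
     {{\<phi>. \<phi> ` K \<subseteq> U} | K U. compact K \<and> open (U::complex set)}"

definition MaxA :: "(complex \<Rightarrow> 'a::{ab_group_add,topological_space} \<Rightarrow> 'a) \<Rightarrow> 'a set set" where
  "MaxA sc = {V. closed V \<and> module.subspace sc V}"

definition lower_vietoris :: "(complex \<Rightarrow> 'a::{ab_group_add,topological_space} \<Rightarrow> 'a) \<Rightarrow> 'a set topology" where
  "lower_vietoris sc = gen_top_on (MaxA sc) {{V. V \<inter> U \<noteq> {}} | U. open U}"

definition annih :: "(complex \<Rightarrow> 'a::{ab_group_add,topological_space} \<Rightarrow> 'a) \<Rightarrow> 'a set \<Rightarrow> ('a \<Rightarrow> complex) set" where
  "annih sc V = {\<phi> \<in> cdual sc. \<forall>v\<in>V. \<phi> v = 0}"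

definition annih_top :: "(complex \<Rightarrow> 'a::{ab_group_add,topological_space} \<Rightarrow> 'a) \<Rightarrow> 'a set topology" where
  "annih_top sc = gen_top_on (MaxA sc)
     {{V. annih sc V \<inter> K' = {}} | K'. compactin (dual_top sc) K'}"

end

theory Submission
  imports Defs
begin

text \<open>Let \<open>V\<^sub>0\<close> be a closed subspace with \<open>F(V\<^sub>0) \<inter> K' = {}\<close>. Every \<open>\<phi> \<in> K'\<close> is nonzero
  at some point of \<open>V\<^sub>0\<close>, and by compactness of \<open>K'\<close> finitely many points \<open>p \<in> P \<subseteq> V\<^sub>0\<close>
  suffice. Using first countability one shrinks them to open neighbourhoods \<open>U\<^sub>p\<close> such that
  every \<open>\<phi> \<in> K'\<close> vanishes nowhere on some \<open>U\<^sub>p\<close>: otherwise there are \<open>\<phi>\<^sub>n \<in> K'\<close> and zeros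
  \<open>w\<^sub>p\<^sub>,\<^sub>n \<rightarrow> p\<close> of \<open>\<phi>\<^sub>n\<close>, and a cluster point \<open>\<phi>\<close> of \<open>(\<phi>\<^sub>n)\<close> with \<open>\<phi>(p) \<noteq> 0\<close> is separated
  from the tail of \<open>(\<phi>\<^sub>n)\<close> by the compact-open neighbourhood of functionals nonvanishing on
  the compact set \<open>{p} \<union> {w\<^sub>p\<^sub>,\<^sub>n : n \<ge> N}\<close>. Then the lower Vietoris neighbourhood of \<open>V\<^sub>0\<close>
  consisting of the subspaces meeting every \<open>U\<^sub>p\<close> avoids \<open>K'\<close> as well.\<close>

lemma topspace_gen_top_on [simp]: "topspace (gen_top_on X S) = X"
  unfolding gen_top_on_def by auto

lemma openin_gen_top_on_carrier: "openin (gen_top_on X S) X"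
  unfolding gen_top_on_def by (rule topology_generated_by_Basis) auto

lemma openin_gen_top_on_subbasis: "s \<in> S \<Longrightarrow> openin (gen_top_on X S) (X \<inter> s)"
  unfolding gen_top_on_def by (rule topology_generated_by_Basis) auto

lemma openin_gen_top_on_finite_Inter:
  assumes "finite I" "\<And>i. i \<in> I \<Longrightarrow> s i \<in> S"
  shows "openin (gen_top_on X S) (X \<inter> \<Inter>(s ` I))"
  using assms
proof (induction I rule: finite_induct)
  case empty
  then show ?case by (simp add: openin_gen_top_on_carrier)
next
  case (insert i I)
  have "X \<inter> \<Inter>(s ` insert i I) = (X \<inter> s i) \<inter> (X \<inter> \<Inter>(s ` I))"
    by blast
  then show ?case
    using insert by (simp add: openin_Int openin_gen_top_on_subbasis)
qed

lemma gen_top_on_coarsest: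
  assumes "openin (gen_top_on X S) U" "openin T X" "\<And>s. s \<in> S \<Longrightarrow> openin T (X \<inter> s)"
  shows "openin T U"
proof -
  have generated: "generate_topology_on (insert X ((\<inter>) X ` S)) U"
    using assms(1) unfolding gen_top_on_def openin_topology_generated_by_iff .
  show ?thesis
    by (rule generate_topology_on_coarsest[OF istopology_openin _ generated]) (use assms(2,3) in auto)
qed

lemma compactin_finite_subcover_image:
  assumes "compactin X S" "\<And>i. i \<in> I \<Longrightarrow> openin X (G i)" "S \<subseteq> \<Union>(G ` I)"
  obtains J where "finite J" "J \<subseteq> I" "S \<subseteq> \<Union>(G ` J)"
proof -
  obtain \<F> where "finite \<F>" "\<F> \<subseteq> G ` I" "S \<subseteq> \<Union>\<F>"
    using compactinD[OF assms(1), of "G ` I"] assms(2,3) by blast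
  then obtain J where "J \<subseteq> I" "finite J" "\<F> = G ` J"
    by (meson finite_subset_image)
  then show thesis
    using that \<open>S \<subseteq> \<Union>\<F>\<close> by blast
qed

lemma compactin_sequence_cluster_point:
  assumes "compactin X K" "\<And>n. x n \<in> K"
  shows "\<exists>l\<in>K. \<forall>G. openin X G \<and> l \<in> G \<longrightarrow> (\<exists>\<^sub>F n in sequentially. x n \<in> G)"
proof (rule ccontr)
  assume "\<not> ?thesis"
  then have "\<forall>l\<in>K. \<exists>G. openin X G \<and> l \<in> G \<and> (\<forall>\<^sub>F n in sequentially. x n \<notin> G)"
    by (simp add: not_frequently)
  then obtain G where G: "\<And>l. l \<in> K \<Longrightarrow> openin X (G l) \<and> l \<in> G l"
    and ev: "\<And>l. l \<in> K \<Longrightarrow> \<forall>\<^sub>F n in sequentially. x n \<notin> G l"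
    by (auto dest!: bchoice)
  obtain F where F: "finite F" "F \<subseteq> K" "K \<subseteq> \<Union>(G ` F)"
    using compactin_finite_subcover_image[OF assms(1), of K G] G by blast
  have "\<forall>\<^sub>F n in sequentially. \<forall>l\<in>F. x n \<notin> G l"
    using F(1) by (rule eventually_ball_finite) (use F(2) ev in blast)
  then obtain n where "\<forall>l\<in>F. x n \<notin> G l"
    by (auto simp: eventually_sequentially)
  then show False
    using F(3) assms(2) by blast
qed

lemma topspace_dual_top [simp]: "topspace (dual_top sc) = cdual sc"
  unfolding dual_top_def by simp

lemma openin_dual_top_nonvanishing:
  assumes "compact C"
  shows "openin (dual_top sc) {\<psi> \<in> cdual sc. \<forall>x\<in>C. \<psi> x \<noteq> 0}"
proof -
  have "{\<psi>. \<psi> ` C \<subseteq> -{0}} \<in> {{\<phi>. \<phi> ` K \<subseteq> U} | K U. compact K \<and> open (U::complex set)}"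
    by (intro CollectI exI[of _ C] exI[of _ "-{0}"]) (simp add: assms open_Compl)
  then have "openin (dual_top sc) (cdual sc \<inter> {\<psi>. \<psi> ` C \<subseteq> -{0}})"
    unfolding dual_top_def by (rule openin_gen_top_on_subbasis)
  moreover have "cdual sc \<inter> {\<psi>. \<psi> ` C \<subseteq> -{0}} = {\<psi> \<in> cdual sc. \<forall>x\<in>C. \<psi> x \<noteq> 0}"
    by auto
  ultimately show ?thesis
    by simp
qed

lemma compactin_dual_top_finite_witnesses:
  assumes "compactin (dual_top sc) K" "\<And>\<phi>. \<phi> \<in> K \<Longrightarrow> \<exists>v\<in>V. \<phi> v \<noteq> 0"
  obtains P where "finite P" "P \<subseteq> V" "\<And>\<phi>. \<phi> \<in> K \<Longrightarrow> \<exists>p\<in>P. \<phi> p \<noteq> 0"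
proof -
  define G where "G v = {\<psi> \<in> cdual sc. \<forall>x\<in>{v}. \<psi> x \<noteq> 0}" for v
  have G_open: "openin (dual_top sc) (G v)" for v
    unfolding G_def by (rule openin_dual_top_nonvanishing) simp
  have "K \<subseteq> \<Union>(G ` V)"
  proof
    fix \<phi> assume "\<phi> \<in> K"
    then have "\<phi> \<in> cdual sc"
      using compactin_subset_topspace[OF assms(1)] by auto
    moreover obtain v where "v \<in> V" "\<phi> v \<noteq> 0"
      using assms(2) \<open>\<phi> \<in> K\<close> by blast
    ultimately show "\<phi> \<in> \<Union>(G ` V)"
      unfolding G_def by blast
  qed
  then obtain P where "finite P" "P \<subseteq> V" and cover: "K \<subseteq> \<Union>(G ` P)"
    by (rule compactin_finite_subcover_image[OF assms(1) G_open])
  show thesis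
  proof (rule that)
    show "finite P" "P \<subseteq> V"
      by fact+
    show "\<exists>p\<in>P. \<phi> p \<noteq> 0" if "\<phi> \<in> K" for \<phi>
      using cover that unfolding G_def by blast
  qed
qed

lemma first_countable_nhds_bases:
  obtains B :: "'a::first_countable_topology \<Rightarrow> nat \<Rightarrow> 'a set"
  where "\<And>p i. open (B p i)" "\<And>p i. p \<in> B p i" "\<And>p w. (\<forall>n. w n \<in> B p n) \<Longrightarrow> w \<longlonglongrightarrow> p"
proof -
  have "\<forall>p. \<exists>A :: nat \<Rightarrow> 'a set.
      (\<forall>i. open (A i) \<and> p \<in> A i) \<and> (\<forall>w. (\<forall>n. w n \<in> A n) \<longrightarrow> w \<longlonglongrightarrow> p)"
  proof
    fix p
    show "\<exists>A :: nat \<Rightarrow> 'a set.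
        (\<forall>i. open (A i) \<and> p \<in> A i) \<and> (\<forall>w. (\<forall>n. w n \<in> A n) \<longrightarrow> w \<longlonglongrightarrow> p)"
      by (rule first_countable_topology_class.countable_basis[where x = p]) blast
  qed
  from choice[OF this] obtain B :: "'a \<Rightarrow> nat \<Rightarrow> 'a set"
    where "\<forall>p. (\<forall>i. open (B p i) \<and> p \<in> B p i) \<and> (\<forall>w. (\<forall>n. w n \<in> B p n) \<longrightarrow> w \<longlonglongrightarrow> p)"
    by blast
  then show thesis
    by (intro that[of B]) auto
qed

lemma dual_top_nhd_avoiding_zeros:
  assumes "\<phi> \<in> cdual sc" "\<phi> p \<noteq> 0" "w \<longlonglongrightarrow> p" "\<And>n. \<psi> n (w n) = 0"
  obtains G where "openin (dual_top sc) G" "\<phi> \<in> G" "\<forall>\<^sub>F n in sequentially. \<psi> n \<notin> G"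
proof -
  have "(\<lambda>n. \<phi> (w n)) \<longlonglongrightarrow> \<phi> p"
    using assms(1,3) unfolding cdual_def by (auto intro: continuous_on_tendsto_compose)
  then have "\<forall>\<^sub>F n in sequentially. \<phi> (w n) \<noteq> 0"
    using assms(2) by (rule tendsto_imp_eventually_ne)
  then obtain N where N: "\<And>n. n \<ge> N \<Longrightarrow> \<phi> (w n) \<noteq> 0"
    unfolding eventually_sequentially by blast
  define C where "C = insert p (range (\<lambda>n. w (n + N)))"
  have "compactin euclidean C"
    unfolding C_def using LIMSEQ_ignore_initial_segment[OF assms(3), of N]
    by (intro compactin_sequence_with_limit[where \<sigma> = "\<lambda>n. w (n + N)"]) auto
  define G where "G = {\<theta> \<in> cdual sc. \<forall>x\<in>C. \<theta> x \<noteq> 0}"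
  show thesis
  proof (rule that)
    show "openin (dual_top sc) G"
      unfolding G_def by (rule openin_dual_top_nonvanishing) (use \<open>compactin euclidean C\<close> in simp)
    show "\<phi> \<in> G"
      unfolding G_def C_def using assms(1,2) N by auto
    have "\<psi> n \<notin> G" if "n \<ge> N" for n
    proof -
      have "w n \<in> C"
        unfolding C_def using that by (metis le_add_diff_inverse2 rangeI insertI2)
      then show ?thesis
        unfolding G_def using assms(4) by blast
    qed
    then show "\<forall>\<^sub>F n in sequentially. \<psi> n \<notin> G"
      unfolding eventually_sequentially by blast
  qed
qed

lemma compactin_dual_top_nonvanishing_nhds:
  fixes sc :: "complex \<Rightarrow> 'a::{ab_group_add,first_countable_topology} \<Rightarrow> 'a"
  assumes K: "compactin (dual_top sc) K" and P: "\<And>\<phi>. \<phi> \<in> K \<Longrightarrow> \<exists>p\<in>P. \<phi> p \<noteq> 0"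
  obtains U where "\<And>p. open (U p)" "\<And>p. p \<in> U p" "\<And>\<phi>. \<phi> \<in> K \<Longrightarrow> \<exists>p\<in>P. \<forall>w\<in>U p. \<phi> w \<noteq> 0"
proof -
  obtain B :: "'a \<Rightarrow> nat \<Rightarrow> 'a set" where B: "\<And>p i. open (B p i)" "\<And>p i. p \<in> B p i"
    and B_lim: "\<And>p w. (\<forall>n. w n \<in> B p n) \<Longrightarrow> w \<longlonglongrightarrow> p"
    by (rule first_countable_nhds_bases) blast
  have "\<exists>n. \<forall>\<phi>\<in>K. \<exists>p\<in>P. \<forall>w\<in>B p n. \<phi> w \<noteq> 0"
  proof (rule ccontr)
    assume "\<not> ?thesis"
    then have "\<forall>n. \<exists>\<psi>. \<psi> \<in> K \<and> (\<forall>p\<in>P. \<exists>w\<in>B p n. \<psi> w = 0)"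
      by meson
    from choice[OF this] obtain \<psi> where \<psi>: "\<And>n. \<psi> n \<in> K"
      and zeros: "\<And>n p. p \<in> P \<Longrightarrow> \<exists>w\<in>B p n. \<psi> n w = 0"
      by blast
    have "\<forall>p. \<exists>w. p \<in> P \<longrightarrow> (\<forall>n. w n \<in> B p n \<and> \<psi> n (w n) = 0)"
      using zeros by (metis choice)
    from choice[OF this] obtain w where w: "\<And>n p. p \<in> P \<Longrightarrow> w p n \<in> B p n \<and> \<psi> n (w p n) = 0"
      by blast
    have "\<exists>\<phi>\<in>K. \<forall>G. openin (dual_top sc) G \<and> \<phi> \<in> G \<longrightarrow> (\<exists>\<^sub>F n in sequentially. \<psi> n \<in> G)"
      by (rule compactin_sequence_cluster_point[OF K \<psi>])
    then obtain \<phi> where "\<phi> \<in> K"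
      and cluster: "\<And>G. openin (dual_top sc) G \<Longrightarrow> \<phi> \<in> G \<Longrightarrow> \<exists>\<^sub>F n in sequentially. \<psi> n \<in> G"
      by blast
    obtain p where p: "p \<in> P" "\<phi> p \<noteq> 0"
      using P[OF \<open>\<phi> \<in> K\<close>] by blast
    have \<phi>_dual: "\<phi> \<in> cdual sc"
      using \<open>\<phi> \<in> K\<close> compactin_subset_topspace[OF K] by auto
    have w_lim: "w p \<longlonglongrightarrow> p"
      using B_lim w p(1) by blast
    have w_zeros: "\<psi> n (w p n) = 0" for n
      using w[OF p(1)] by blast
    obtain G where G: "openin (dual_top sc) G" "\<phi> \<in> G"
      and avoiding: "\<forall>\<^sub>F n in sequentially. \<psi> n \<notin> G"
      by (rule dual_top_nhd_avoiding_zeros[where \<psi> = \<psi>, OF \<phi>_dual p(2) w_lim w_zeros]) blast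
    have "\<exists>\<^sub>F n in sequentially. \<psi> n \<in> G"
      by (rule cluster[OF G])
    with avoiding show False
      by (simp add: frequently_def)
  qed
  then obtain n where "\<And>\<phi>. \<phi> \<in> K \<Longrightarrow> \<exists>p\<in>P. \<forall>w\<in>B p n. \<phi> w \<noteq> 0"
    by blast
  then show thesis
    using that[of "\<lambda>p. B p n"] B by blast
qed

lemma openin_lower_vietoris_annih_disjoint:
  fixes sc :: "complex \<Rightarrow> 'a::{ab_group_add,first_countable_topology} \<Rightarrow> 'a"
  assumes K: "compactin (dual_top sc) K"
  shows "openin (lower_vietoris sc) (MaxA sc \<inter> {V. annih sc V \<inter> K = {}})"
proof (subst openin_subopen, intro ballI)
  fix V\<^sub>0 assume V\<^sub>0: "V\<^sub>0 \<in> MaxA sc \<inter> {V. annih sc V \<inter> K = {}}"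
  have "\<exists>v\<in>V\<^sub>0. \<phi> v \<noteq> 0" if "\<phi> \<in> K" for \<phi>
  proof (rule ccontr)
    assume "\<not> ?thesis"
    moreover have "\<phi> \<in> cdual sc"
      using that compactin_subset_topspace[OF K] by auto
    ultimately have "\<phi> \<in> annih sc V\<^sub>0 \<inter> K"
      unfolding annih_def using that by blast
    with V\<^sub>0 show False
      by blast
  qed
  then obtain P where P: "finite P" "P \<subseteq> V\<^sub>0" "\<And>\<phi>. \<phi> \<in> K \<Longrightarrow> \<exists>p\<in>P. \<phi> p \<noteq> 0"
    by (rule compactin_dual_top_finite_witnesses[OF K]) blast+
  obtain U where U: "\<And>p. open (U p)" "\<And>p. p \<in> U p"
    and U_nonvanishing: "\<And>\<phi>. \<phi> \<in> K \<Longrightarrow> \<exists>p\<in>P. \<forall>w\<in>U p. \<phi> w \<noteq> 0"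
    by (rule compactin_dual_top_nonvanishing_nhds[OF K P(3)]) blast+
  define T where "T = MaxA sc \<inter> \<Inter>((\<lambda>p. {V. V \<inter> U p \<noteq> {}}) ` P)"
  have "openin (lower_vietoris sc) T"
    unfolding T_def lower_vietoris_def using P(1) U(1)
    by (intro openin_gen_top_on_finite_Inter) auto
  moreover have "V\<^sub>0 \<in> T"
    unfolding T_def using V\<^sub>0 P(2) U(2) by blast
  moreover have "annih sc V \<inter> K = {}" if "V \<in> T" for V
  proof -
    have "\<phi> \<notin> annih sc V" if "\<phi> \<in> K" for \<phi>
    proof -
      obtain p where "p \<in> P" and nonzero: "\<forall>w\<in>U p. \<phi> w \<noteq> 0"
        using U_nonvanishing \<open>\<phi> \<in> K\<close> by blast
      then obtain w where "w \<in> V" "w \<in> U p"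
        using \<open>V \<in> T\<close> unfolding T_def by blast
      with nonzero show ?thesis
        unfolding annih_def by blast
    qed
    then show ?thesis
      by blast
  qed
  then have "T \<subseteq> MaxA sc \<inter> {V. annih sc V \<inter> K = {}}"
    unfolding T_def by blast
  ultimately show "\<exists>T. openin (lower_vietoris sc) T \<and> V\<^sub>0 \<in> T \<and> T \<subseteq> MaxA sc \<inter> {V. annih sc V \<inter> K = {}}"
    by blast
qed

theorem lemma7p10:
  fixes sc :: "complex \<Rightarrow> 'a::{ab_group_add,first_countable_topology} \<Rightarrow> 'a"
  assumes "locally_convex sc"
  shows "\<forall>S. openin (annih_top sc) S \<longrightarrow> openin (lower_vietoris sc) S"
proof (intro allI impI)
  fix S assume "openin (annih_top sc) S"
  then show "openin (lower_vietoris sc) S"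
    unfolding annih_top_def
  proof (rule gen_top_on_coarsest)
    show "openin (lower_vietoris sc) (MaxA sc)"
      unfolding lower_vietoris_def by (rule openin_gen_top_on_carrier)
  next
    fix s assume "s \<in> {{V. annih sc V \<inter> K' = {}} | K'. compactin (dual_top sc) K'}"
    then show "openin (lower_vietoris sc) (MaxA sc \<inter> s)"
      using openin_lower_vietoris_annih_disjoint by blast
  qed
qed

end
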